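(* Let $\kappa$ be an infinite cardinal, let $(G_\alpha:\alpha<\kappa)$ be topological groups, let $G=\prod_{\alpha<\kappa}G_\alpha$ with the product topology and coordinatewise operation, and let $X\subseteq G$. Then the following are equivalent: (1) $X$ is Rothberger bounded in $G$; (2) for each countable set $C\subseteq\kappa$, the set $X_C=\{f\restriction C:f\in X\}$ is a Rothberger bounded subset of $G_C=\prod_{\alpha\in C}G_\alpha$.
   Context: All topological groups are assumed Tychonoff. A subset $X$ of a topological group $(H,* )$ is Rothberger bounded if for every sequence $(U_n:n<\omega)$ of open neighborhoods of the identity there are $h_n\in H$ with $X\subseteq\bigcup_n h_n*U_n$. *)

theory Defs
  imports "HOL-Analysis.Analysis" "HOL-Algebra.Product_Groups" "HOL-Algebra.Coset"
begin

definition topological_group :: "('a, 'b) monoid_scheme \<Rightarrow> 'a topology \<Rightarrow> bool" where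
  "topological_group G T \<longleftrightarrow>
     group G \<and> topspace T = carrier G \<and>
     continuous_map (prod_topology T T) T (\<lambda>(x, y). x \<otimes>\<^bsub>G\<^esub> y) \<and>
     continuous_map T T (\<lambda>x. inv\<^bsub>G\<^esub> x) \<and>
     completely_regular_space T \<and> t1_space T"

definition rothberger_bounded :: "('a, 'b) monoid_scheme \<Rightarrow> 'a topology \<Rightarrow> 'a set \<Rightarrow> bool" where
  "rothberger_bounded G T X \<longleftrightarrow>
     (\<forall>U :: nat \<Rightarrow> 'a set. (\<forall>n. openin T (U n) \<and> \<one>\<^bsub>G\<^esub> \<in> U n) \<longrightarrow>
        (\<exists>h :: nat \<Rightarrow> 'a. (\<forall>n. h n \<in> carrier G) \<and> X \<subseteq> (\<Union>n. h n <#\<^bsub>G\<^esub> U n)))"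

end

theory Submission
  imports Defs
begin

text \<open>Rothberger boundedness is preserved by continuous homomorphisms, and restriction to a
subproduct is one; this gives (1) \<Longrightarrow> (2). Conversely, each identity neighbourhood in the
product contains a box constraining only finitely many coordinates, so the boxes for a whole
sequence of neighbourhoods constrain only the coordinates in a countable set \<open>C\<close>. Translates
of the \<open>C\<close>-boxes covering \<open>X\<^sub>C\<close> lift to translates of the full boxes covering \<open>X\<close>, by
extending the translating elements with the identity outside \<open>C\<close>.\<close>

lemma restrict_hom_product_group:
  assumes "C \<subseteq> K"
  shows "(\<lambda>f. restrict f C) \<in> hom (product_group K G) (product_group C G)"
  using assms by (intro homI) (auto simp: PiE_iff fun_eq_iff)

lemma rothberger_bounded_hom_image:
  assumes "group G" "group H" "topspace TG = carrier G"
    and "\<phi> \<in> hom G H" "continuous_map TG TH \<phi>"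
    and "rothberger_bounded G TG X"
  shows "rothberger_bounded H TH (\<phi> ` X)"
  unfolding rothberger_bounded_def
proof (intro allI impI)
  interpret group_hom G H \<phi>
    using assms(1,2,4) by (simp add: group_hom_def group_hom_axioms_def)
  fix U :: "nat \<Rightarrow> _" assume U: "\<forall>n. openin TH (U n) \<and> \<one>\<^bsub>H\<^esub> \<in> U n"
  define V where "V n = {x \<in> topspace TG. \<phi> x \<in> U n}" for n
  have "\<forall>n. openin TG (V n) \<and> \<one>\<^bsub>G\<^esub> \<in> V n"
    using U openin_continuous_map_preimage[OF assms(5)] assms(3) by (auto simp: V_def)
  then obtain h where h: "\<forall>n. h n \<in> carrier G" "X \<subseteq> (\<Union>n. h n <#\<^bsub>G\<^esub> V n)"
    using assms(6) unfolding rothberger_bounded_def by meson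
  have coset_image: "\<phi> ` (h n <#\<^bsub>G\<^esub> V n) \<subseteq> \<phi> (h n) <#\<^bsub>H\<^esub> U n" for n
  proof
    fix y assume "y \<in> \<phi> ` (h n <#\<^bsub>G\<^esub> V n)"
    then obtain v where v: "v \<in> V n" "y = \<phi> (h n \<otimes>\<^bsub>G\<^esub> v)"
      by (auto simp: l_coset_def)
    then have "y = \<phi> (h n) \<otimes>\<^bsub>H\<^esub> \<phi> v"
      using h(1) assms(3) by (simp add: V_def)
    with v(1) show "y \<in> \<phi> (h n) <#\<^bsub>H\<^esub> U n"
      by (auto simp: l_coset_def V_def)
  qed
  have "\<phi> ` X \<subseteq> (\<Union>n. \<phi> ` (h n <#\<^bsub>G\<^esub> V n))"
    using h(2) by (metis image_UN image_mono)
  also have "\<dots> \<subseteq> (\<Union>n. \<phi> (h n) <#\<^bsub>H\<^esub> U n)"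
    using coset_image by (rule UN_mono[OF subset_refl])
  finally show "\<exists>h'. (\<forall>n. h' n \<in> carrier H) \<and> \<phi> ` X \<subseteq> (\<Union>n. h' n <#\<^bsub>H\<^esub> U n)"
    using h(1) by (intro exI[of _ "\<lambda>n. \<phi> (h n)"]) auto
qed

lemma rothberger_bounded_restrict_product:
  assumes "\<And>i. i \<in> K \<Longrightarrow> group (G i)" "\<And>i. i \<in> K \<Longrightarrow> topspace (T i) = carrier (G i)"
    and "C \<subseteq> K" "rothberger_bounded (product_group K G) (product_topology T K) X"
  shows "rothberger_bounded (product_group C G) (product_topology T C) ((\<lambda>f. restrict f C) ` X)"
proof (rule rothberger_bounded_hom_image)
  show "group (product_group K G)" "group (product_group C G)"
    using assms(1,3) by (simp_all add: subset_iff)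
  show "topspace (product_topology T K) = carrier (product_group K G)"
    using assms(2) by (simp cong: PiE_cong)
qed (use assms(3,4) in \<open>simp_all add: restrict_hom_product_group continuous_on_restrict\<close>)

lemma l_coset_product_group_extend:
  assumes "\<And>i. i \<in> K \<Longrightarrow> monoid (G i)" "C \<subseteq> K" "f \<in> carrier (product_group K G)"
    and "\<And>i. i \<in> K - C \<Longrightarrow> W i = carrier (G i)"
    and "restrict f C \<in> h <#\<^bsub>product_group C G\<^esub> Pi\<^sub>E C W"
  shows "f \<in> (\<lambda>i\<in>K. if i \<in> C then h i else \<one>\<^bsub>G i\<^esub>) <#\<^bsub>product_group K G\<^esub> Pi\<^sub>E K W"
proof -
  from assms(5) obtain u where u: "u \<in> Pi\<^sub>E C W" "restrict f C = (\<lambda>i\<in>C. h i \<otimes>\<^bsub>G i\<^esub> u i)"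
    by (auto simp: l_coset_def)
  define v where "v = (\<lambda>i\<in>K. if i \<in> C then u i else f i)"
  have "v \<in> Pi\<^sub>E K W"
    using u(1) assms(3,4) by (auto simp: v_def PiE_iff)
  moreover have "f = (\<lambda>i\<in>K. (if i \<in> C then h i else \<one>\<^bsub>G i\<^esub>) \<otimes>\<^bsub>G i\<^esub> v i)"
  proof
    fix i
    show "f i = (\<lambda>i\<in>K. (if i \<in> C then h i else \<one>\<^bsub>G i\<^esub>) \<otimes>\<^bsub>G i\<^esub> v i) i"
      using fun_cong[OF u(2), of i] assms(1-3)
      by (cases "i \<in> K") (auto simp: v_def PiE_iff extensional_def monoid.l_one)
  qed
  ultimately show ?thesis
    unfolding l_coset_def by (auto intro!: bexI[of _ v] simp: fun_eq_iff)
qed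

lemma openin_product_topology_boxes:
  assumes "\<And>n. openin (product_topology T K) (U n)" "\<And>n. x \<in> U n"
  obtains W where "\<And>n. finite {i \<in> K. W n i \<noteq> topspace (T i)}"
    "\<And>n. \<forall>i\<in>K. openin (T i) (W n i)" "\<And>n. x \<in> Pi\<^sub>E K (W n)" "\<And>n. Pi\<^sub>E K (W n) \<subseteq> U n"
proof -
  have "\<forall>n. \<exists>W. finite {i \<in> K. W i \<noteq> topspace (T i)} \<and> (\<forall>i\<in>K. openin (T i) (W i)) \<and>
      x \<in> Pi\<^sub>E K W \<and> Pi\<^sub>E K W \<subseteq> U n"
  proof
    fix n
    show "\<exists>W. finite {i \<in> K. W i \<noteq> topspace (T i)} \<and> (\<forall>i\<in>K. openin (T i) (W i)) \<and>
        x \<in> Pi\<^sub>E K W \<and> Pi\<^sub>E K W \<subseteq> U n"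
      using assms(1,2)[of n] unfolding openin_product_topology_alt by blast
  qed
  then obtain W where "\<forall>n. finite {i \<in> K. W n i \<noteq> topspace (T i)} \<and> (\<forall>i\<in>K. openin (T i) (W n i)) \<and>
      x \<in> Pi\<^sub>E K (W n) \<and> Pi\<^sub>E K (W n) \<subseteq> U n"
    by (rule choice[THEN exE])
  with that show thesis
    by blast
qed

lemma rothberger_bounded_product_if_countable_restrictions:
  assumes "\<And>i. i \<in> K \<Longrightarrow> group (G i)" "\<And>i. i \<in> K \<Longrightarrow> topspace (T i) = carrier (G i)"
    and "X \<subseteq> carrier (product_group K G)"
    and "\<And>C. \<lbrakk>C \<subseteq> K; countable C\<rbrakk> \<Longrightarrow>
      rothberger_bounded (product_group C G) (product_topology T C) ((\<lambda>f. restrict f C) ` X)"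
  shows "rothberger_bounded (product_group K G) (product_topology T K) X"
  unfolding rothberger_bounded_def
proof (intro allI impI)
  fix U :: "nat \<Rightarrow> _"
  assume "\<forall>n. openin (product_topology T K) (U n) \<and> \<one>\<^bsub>product_group K G\<^esub> \<in> U n"
  then have "openin (product_topology T K) (U n)" "(\<lambda>i\<in>K. \<one>\<^bsub>G i\<^esub>) \<in> U n" for n
    by auto
  then obtain W where W: "\<And>n. finite {i \<in> K. W n i \<noteq> topspace (T i)}"
      "\<And>n. \<forall>i\<in>K. openin (T i) (W n i)" "\<And>n. (\<lambda>i\<in>K. \<one>\<^bsub>G i\<^esub>) \<in> Pi\<^sub>E K (W n)"
      "\<And>n. Pi\<^sub>E K (W n) \<subseteq> U n"
    using openin_product_topology_boxes[of T K U] by blast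
  define C where "C = (\<Union>n. {i \<in> K. W n i \<noteq> topspace (T i)})"
  have C: "C \<subseteq> K" "countable C"
    unfolding C_def using W(1) by (auto intro: countable_finite)
  have "openin (product_topology T C) (Pi\<^sub>E C (W n)) \<and> \<one>\<^bsub>product_group C G\<^esub> \<in> Pi\<^sub>E C (W n)" for n
  proof -
    have "finite {i \<in> C. W n i \<noteq> topspace (T i)}"
      by (rule finite_subset[OF _ W(1)[of n]]) (use C(1) in auto)
    then show ?thesis
      using W(2,3)[of n] C(1) by (auto simp: openin_PiE_gen PiE_iff)
  qed
  then obtain h' :: "nat \<Rightarrow> _" where h': "\<forall>n. h' n \<in> carrier (product_group C G)"
      "(\<lambda>f. restrict f C) ` X \<subseteq> (\<Union>n. h' n <#\<^bsub>product_group C G\<^esub> Pi\<^sub>E C (W n))"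
    using assms(4)[OF C] unfolding rothberger_bounded_def by meson
  define h where "h n = (\<lambda>i\<in>K. if i \<in> C then h' n i else \<one>\<^bsub>G i\<^esub>)" for n
  have "h n \<in> carrier (product_group K G)" for n
    using h'(1) assms(1) by (auto simp: h_def PiE_iff group.is_monoid monoid.one_closed)
  moreover have "X \<subseteq> (\<Union>n. h n <#\<^bsub>product_group K G\<^esub> U n)"
  proof
    fix f assume "f \<in> X"
    with h'(2) obtain n where "restrict f C \<in> h' n <#\<^bsub>product_group C G\<^esub> Pi\<^sub>E C (W n)"
      by blast
    then have "f \<in> h n <#\<^bsub>product_group K G\<^esub> Pi\<^sub>E K (W n)"
      unfolding h_def
      using \<open>f \<in> X\<close> assms(1-3) C(1)
      by (intro l_coset_product_group_extend) (auto simp: C_def group.is_monoid)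
    then show "f \<in> (\<Union>n. h n <#\<^bsub>product_group K G\<^esub> U n)"
      using W(4)[of n] unfolding l_coset_def by blast
  qed
  ultimately show "\<exists>h. (\<forall>n. h n \<in> carrier (product_group K G)) \<and>
      X \<subseteq> (\<Union>n. h n <#\<^bsub>product_group K G\<^esub> U n)"
    by blast
qed

theorem lemma4:
  fixes K :: "'i set"
    and G :: "'i \<Rightarrow> 'a monoid"
    and T :: "'i \<Rightarrow> 'a topology"
    and X :: "('i \<Rightarrow> 'a) set"
  assumes "infinite K"
    and "\<And>\<alpha>. \<alpha> \<in> K \<Longrightarrow> topological_group (G \<alpha>) (T \<alpha>)"
    and "X \<subseteq> carrier (product_group K G)"
  shows "rothberger_bounded (product_group K G) (product_topology T K) X \<longleftrightarrow>
         (\<forall>C. C \<subseteq> K \<and> countable C \<longrightarrow>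
            rothberger_bounded (product_group C G) (product_topology T C) ((\<lambda>f. restrict f C) ` X))"
proof -
  have group: "\<And>\<alpha>. \<alpha> \<in> K \<Longrightarrow> group (G \<alpha>)"
    and carrier: "\<And>\<alpha>. \<alpha> \<in> K \<Longrightarrow> topspace (T \<alpha>) = carrier (G \<alpha>)"
    using assms(2) unfolding topological_group_def by auto
  show ?thesis
  proof
    assume "rothberger_bounded (product_group K G) (product_topology T K) X"
    then show "\<forall>C. C \<subseteq> K \<and> countable C \<longrightarrow>
        rothberger_bounded (product_group C G) (product_topology T C) ((\<lambda>f. restrict f C) ` X)"
      by (simp add: rothberger_bounded_restrict_product[OF group carrier])
  next
    assume "\<forall>C. C \<subseteq> K \<and> countable C \<longrightarrow>
        rothberger_bounded (product_group C G) (product_topology T C) ((\<lambda>f. restrict f C) ` X)"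
    then have "\<And>C. \<lbrakk>C \<subseteq> K; countable C\<rbrakk> \<Longrightarrow>
        rothberger_bounded (product_group C G) (product_topology T C) ((\<lambda>f. restrict f C) ` X)"
      by blast
    with group carrier assms(3)
    show "rothberger_bounded (product_group K G) (product_topology T K) X"
      by (rule rothberger_bounded_product_if_countable_restrictions)
  qed
qed

end
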